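(* Let $X_1,X_2,\ldots$ be i.i.d. real-valued random variables and set $Z_i=|X_i|$. Let $x_{\max}:=\operatorname{ess\,sup} Z_1=\inf\{x\in\mathbb{R}:\mathbb{P}(Z_1\le x)=1\}$ and assume $x_{\max}<\infty$; equivalently, $\mathbb{P}(Z_1\le x_{\max})=1$ and $\mathbb{P}(Z_1>x_{\max}-\varepsilon)>0$ for every $\varepsilon>0$. For each block size $g\ge 1$, with the block $X=(X_1,\dots,X_g)$, let $R_g^\star$ and $R_{\mathrm{PO2},g}^\star$ be the best single-grid risk and the best two-grid risk defined below. Then $$\lim_{g\to\infty}\bigl(R_g^\star-R_{\mathrm{PO2},g}^\star\bigr)=0.$$
   Context: Grid space: $\overline{\mathcal C}:=\{B=(b_0,\dots,b_7):0=b_0\le b_1\le\cdots\le b_6\le b_7=1\}$. For $B\in\overline{\mathcal C}$ and $a\in[0,1]$, $\psi_B(a):=\min_{0\le j\le 7}(a-b_j)^2$. For a block $X=(X_1,\dots,X_g)\in\mathbb{R}^g$ let $M_g:=\max_{1\le i\le g}|X_i|$; if $M_g>0$ put $A_{i,g}:=|X_i|/M_g\in[0,1]$, and if $M_g=0$ put $A_{i,g}:=0$ (zero-block convention, loss zero). The block loss is $L_B^{(g)}(X):=M_g^2\,\frac1g\sum_{i=1}^g\psi_B(A_{i,g})$. Define $R_g^\star:=\min_{B\in\overline{\mathcal C}}\mathbb{E}\,L_B^{(g)}(X)$ and $R_{\mathrm{PO2},g}^\star:=\inf_{B_1,B_2\in\overline{\mathcal C}}\mathbb{E}\bigl[\min\{L_{B_1}^{(g)}(X),L_{B_2}^{(g)}(X)\}\bigr]$.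 *)

theory Defs
  imports "HOL-Probability.Probability"
begin

text \<open>Grids B = (b_0,...,b_7) are represented as functions nat => real;
  only the values at 0..7 matter.\<close>

definition grids :: "(nat \<Rightarrow> real) set" where
  "grids = {B. B 0 = 0 \<and> B 7 = 1 \<and> (\<forall>j<7. B j \<le> B (Suc j))}"

definition psi :: "(nat \<Rightarrow> real) \<Rightarrow> real \<Rightarrow> real" where
  "psi B a = Min ((\<lambda>j. (a - B j)^2) ` {0..7})"

text \<open>Block (x_1,...,x_g), given as a function nat => real on indices 1..g.\<close>

definition block_max :: "nat \<Rightarrow> (nat \<Rightarrow> real) \<Rightarrow> real" where
  "block_max g x = Max ((\<lambda>i. \<bar>x i\<bar>) ` {1..g})"

definition block_A :: "nat \<Rightarrow> (nat \<Rightarrow> real) \<Rightarrow> nat \<Rightarrow> real" where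
  "block_A g x i = (if block_max g x > 0 then \<bar>x i\<bar> / block_max g x else 0)"

definition block_loss :: "(nat \<Rightarrow> real) \<Rightarrow> nat \<Rightarrow> (nat \<Rightarrow> real) \<Rightarrow> real" where
  "block_loss B g x =
     (if block_max g x = 0 then 0
      else (block_max g x)^2 * ((1 / real g) * (\<Sum>i=1..g. psi B (block_A g x i))))"

definition R_star :: "'a measure \<Rightarrow> (nat \<Rightarrow> 'a \<Rightarrow> real) \<Rightarrow> nat \<Rightarrow> real" where
  "R_star M X g = (INF B\<in>grids. integral\<^sup>L M (\<lambda>\<omega>. block_loss B g (\<lambda>i. X i \<omega>)))"

definition R_PO2 :: "'a measure \<Rightarrow> (nat \<Rightarrow> 'a \<Rightarrow> real) \<Rightarrow> nat \<Rightarrow> real" where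
  "R_PO2 M X g = (INF BB\<in>grids \<times> grids.
      integral\<^sup>L M (\<lambda>\<omega>. min (block_loss (fst BB) g (\<lambda>i. X i \<omega>))
                              (block_loss (snd BB) g (\<lambda>i. X i \<omega>))))"

end

theory Submission
  imports Defs
begin

text \<open>The block maximum \<open>M\<^sub>g\<close> tends to \<open>x\<^sub>m\<^sub>a\<^sub>x\<close> in \<open>L\<^sup>1\<close>, because
  \<open>P(M\<^sub>g \<le> x\<^sub>m\<^sub>a\<^sub>x - \<epsilon>) = P(\<bar>X\<^sub>1\<bar> \<le> x\<^sub>m\<^sub>a\<^sub>x - \<epsilon>)\<^sup>g\<close> with a base below \<open>1\<close>.
  Replacing \<open>M\<^sub>g\<close> by \<open>x\<^sub>m\<^sub>a\<^sub>x\<close> inside the block loss changes it by at most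
  \<open>2 x\<^sub>m\<^sub>a\<^sub>x (x\<^sub>m\<^sub>a\<^sub>x - M\<^sub>g)\<close>, and what is left is the empirical mean of the i.i.d.
  bounded errors \<open>min\<^sub>j (\<bar>X\<^sub>i\<bar> - x\<^sub>m\<^sub>a\<^sub>x b\<^sub>j)\<^sup>2\<close>, which is within \<open>x\<^sub>m\<^sub>a\<^sub>x\<^sup>2 / \<surd>g\<close> of its
  mean \<open>\<mu>\<^sub>B\<close> in \<open>L\<^sup>1\<close>. So every block loss \<open>L\<^sub>B\<close> is \<open>\<delta>\<^sub>g\<close>-close in \<open>L\<^sup>1\<close> to the
  constant \<open>\<mu>\<^sub>B\<close>, with \<open>\<delta>\<^sub>g \<longrightarrow> 0\<close> uniformly in \<open>B\<close>; when all losses are nearly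
  deterministic, picking the better of two grids per block gains at most \<open>3 \<delta>\<^sub>g\<close>.\<close>

section \<open>Grids and the block loss\<close>

lemma grid_bounds:
  assumes "B \<in> grids" "j \<le> 7"
  shows "0 \<le> B j" "B j \<le> 1"
proof -
  have step: "\<And>n. n < 7 \<Longrightarrow> B n \<le> B (Suc n)" and "B 0 = 0" "B 7 = 1"
    using assms(1) by (auto simp: grids_def)
  have "B 0 \<le> B j"
    using assms(2) by (induction j) (auto intro: order_trans[OF _ step])
  then show "0 \<le> B j" using \<open>B 0 = 0\<close> by simp
  have "B j \<le> B 7"
    using assms(2) by (induction j rule: inc_induct) (auto intro: order_trans[OF step])
  then show "B j \<le> 1" using \<open>B 7 = 1\<close> by simp
qed

lemma grids_nonempty: "grids \<noteq> {}"
proof -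
  have "(\<lambda>j. if j = 7 then 1 else 0) \<in> grids" by (simp add: grids_def)
  then show ?thesis by blast
qed

text \<open>For \<open>m > 0\<close>, \<open>scaled_grid_error B m z = m\<^sup>2 \<psi>\<^sub>B(z / m)\<close>: the squared distance from
  \<open>z\<close> to the grid \<open>B\<close> stretched to \<open>[0, m]\<close>.\<close>
definition scaled_grid_error :: "(nat \<Rightarrow> real) \<Rightarrow> real \<Rightarrow> real \<Rightarrow> real" where
  "scaled_grid_error B m z = Min ((\<lambda>j. (z - m * B j)^2) ` {0..7})"

lemma scaled_grid_error_nonneg: "0 \<le> scaled_grid_error B m z"
  unfolding scaled_grid_error_def by (subst Min_ge_iff) auto

lemma scaled_grid_error_le_square:
  assumes "B \<in> grids"
  shows "scaled_grid_error B m z \<le> z^2"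
proof -
  have "scaled_grid_error B m z \<le> (z - m * B 0)^2"
    unfolding scaled_grid_error_def by (intro Min_le) auto
  then show ?thesis using assms by (simp add: grids_def)
qed

lemma Min_image_diff_abs_le:
  fixes f h :: "'a \<Rightarrow> 'b::linordered_idom"
  assumes "finite S" "S \<noteq> {}" "\<And>j. j \<in> S \<Longrightarrow> \<bar>f j - h j\<bar> \<le> d"
  shows "\<bar>Min (f ` S) - Min (h ` S)\<bar> \<le> d"
proof -
  have "Min (f ` S) \<in> f ` S" "Min (h ` S) \<in> h ` S"
    using assms(1,2) by (intro Min_in; simp)+
  then obtain a b where a: "a \<in> S" "Min (f ` S) = f a" and b: "b \<in> S" "Min (h ` S) = h b"
    by auto
  have "f a \<le> f b" "h b \<le> h a"
    using a b assms(1) Min_le[of "f ` S"] Min_le[of "h ` S"] by auto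
  then show ?thesis using assms(3)[OF a(1)] assms(3)[OF b(1)] a b by (simp add: abs_le_iff)
qed

lemma scaled_grid_error_scale_diff_le:
  assumes "B \<in> grids" "0 \<le> z" "z \<le> m" "0 \<le> M" "M \<le> m"
  shows "\<bar>scaled_grid_error B M z - scaled_grid_error B m z\<bar> \<le> 2 * m * (m - M)"
  unfolding scaled_grid_error_def
proof (rule Min_image_diff_abs_le)
  fix j :: nat assume "j \<in> {0..7}"
  then have b: "0 \<le> B j" "B j \<le> 1" using grid_bounds[OF assms(1)] by auto
  have "0 \<le> (M + m) * B j" "(M + m) * B j \<le> 2 * m"
    using b assms by (simp_all add: mult_left_le) (smt (verit) mult_left_le)
  then have "\<bar>2 * z - (M + m) * B j\<bar> \<le> 2 * m" using assms by linarith
  moreover have "\<bar>(m - M) * B j\<bar> \<le> m - M" using b assms by (simp add: abs_mult mult_left_le)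
  ultimately have "\<bar>(m - M) * B j\<bar> * \<bar>2 * z - (M + m) * B j\<bar> \<le> (m - M) * (2 * m)"
    by (intro mult_mono) auto
  moreover have "(z - M * B j)^2 - (z - m * B j)^2 = (m - M) * B j * (2 * z - (M + m) * B j)"
    by (simp add: power2_eq_square algebra_simps)
  then have "\<bar>(z - M * B j)^2 - (z - m * B j)^2\<bar> = \<bar>(m - M) * B j\<bar> * \<bar>2 * z - (M + m) * B j\<bar>"
    by (simp only: abs_mult)
  moreover have "(m - M) * (2 * m) = 2 * m * (m - M)" by simp
  ultimately show "\<bar>(z - M * B j)^2 - (z - m * B j)^2\<bar> \<le> 2 * m * (m - M)"
    by linarith
qed auto

lemma block_max_ge_abs: "i \<in> {1..g} \<Longrightarrow> \<bar>x i\<bar> \<le> block_max g x"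
  unfolding block_max_def by (rule Max_ge) auto

lemma block_max_nonneg: "g \<ge> 1 \<Longrightarrow> 0 \<le> block_max g x"
  using block_max_ge_abs[of 1 g x] by force

lemma block_max_le: "g \<ge> 1 \<Longrightarrow> (\<And>i. i \<in> {1..g} \<Longrightarrow> \<bar>x i\<bar> \<le> c) \<Longrightarrow> block_max g x \<le> c"
  unfolding block_max_def by (subst Max_le_iff) auto

lemma block_loss_eq:
  "block_loss B g x = (\<Sum>i=1..g. scaled_grid_error B (block_max g x) \<bar>x i\<bar>) / real g"
proof (cases "g \<ge> 1 \<and> block_max g x \<noteq> 0")
  case False
  then have "g = 0 \<or> (\<forall>i\<in>{1..g}. x i = 0 \<and> block_max g x = 0)"
    using block_max_ge_abs[of _ g x] by fastforce
  then show ?thesis by (auto simp: block_loss_def scaled_grid_error_def)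
next
  case True
  let ?m = "block_max g x"
  have m: "?m > 0" using True block_max_nonneg[of g x] by linarith
  have "?m^2 * psi B (block_A g x i) = scaled_grid_error B ?m \<bar>x i\<bar>" for i
  proof -
    have "mono (\<lambda>t. ?m^2 * t)" by (intro monoI mult_left_mono) auto
    then have "?m^2 * psi B (block_A g x i) = Min ((\<lambda>j. ?m^2 * (\<bar>x i\<bar> / ?m - B j)^2) ` {0..7})"
      unfolding psi_def block_A_def using m by (subst mono_Min_commute) (auto simp: image_image)
    also have "\<dots> = scaled_grid_error B ?m \<bar>x i\<bar>"
      unfolding scaled_grid_error_def using m
      by (intro arg_cong[where f = Min] image_cong refl) (simp add: power2_eq_square field_simps)
    finally show ?thesis .
  qed
  then show ?thesis using True by (simp add: block_loss_def sum_distrib_left sum_divide_distrib)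
qed

lemma block_loss_nonneg: "0 \<le> block_loss B g x"
  unfolding block_loss_eq by (simp add: sum_nonneg scaled_grid_error_nonneg)

lemma borel_measurable_scaled_grid_error[measurable]:
  assumes "f \<in> borel_measurable M" "h \<in> borel_measurable M"
  shows "(\<lambda>\<omega>. scaled_grid_error B (f \<omega>) (h \<omega>)) \<in> borel_measurable M"
  unfolding scaled_grid_error_def using assms by measurable

lemma block_loss_diff_le:
  assumes "B \<in> grids" "g \<ge> 1" "\<And>i. i \<in> {1..g} \<Longrightarrow> \<bar>x i\<bar> \<le> m"
  shows "\<bar>block_loss B g x - (\<Sum>i=1..g. scaled_grid_error B m \<bar>x i\<bar>) / real g\<bar>
           \<le> 2 * m * (m - block_max g x)"
proof -
  let ?M = "block_max g x"
  have "\<bar>\<Sum>i=1..g. scaled_grid_error B ?M \<bar>x i\<bar> - scaled_grid_error B m \<bar>x i\<bar>\<bar>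
          \<le> (\<Sum>i=1..g. 2 * m * (m - ?M))"
    using assms block_max_nonneg[of g x] block_max_le[of g x m]
    by (intro order_trans[OF sum_abs] sum_mono scaled_grid_error_scale_diff_le) auto
  then show ?thesis
    using assms(2) by (simp add: block_loss_eq sum_subtractf diff_divide_distrib[symmetric] field_simps)
qed

section \<open>Sums of independent bounded variables\<close>

lemma (in finite_measure) integrable_mult_AE_bounded:
  fixes f h :: "'a \<Rightarrow> real"
  assumes "f \<in> borel_measurable M" "h \<in> borel_measurable M"
    and "AE \<omega> in M. \<bar>f \<omega>\<bar> \<le> c" "AE \<omega> in M. \<bar>h \<omega>\<bar> \<le> c"
  shows "integrable M (\<lambda>\<omega>. f \<omega> * h \<omega>)"
proof (rule integrable_const_bound)
  show "AE \<omega> in M. norm (f \<omega> * h \<omega>) \<le> c * c"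
    using assms(3,4) by eventually_elim (auto simp: abs_mult intro: mult_mono)
qed (use assms(1,2) in auto)

lemma (in prob_space) expectation_abs_le_sqrt:
  fixes f :: "'a \<Rightarrow> real"
  assumes "integrable M f" "integrable M (\<lambda>\<omega>. (f \<omega>)^2)"
  shows "expectation (\<lambda>\<omega>. \<bar>f \<omega>\<bar>) \<le> sqrt (expectation (\<lambda>\<omega>. (f \<omega>)^2))"
proof (rule real_le_rsqrt)
  have "variance (\<lambda>\<omega>. \<bar>f \<omega>\<bar>) = expectation (\<lambda>\<omega>. (f \<omega>)^2) - (expectation (\<lambda>\<omega>. \<bar>f \<omega>\<bar>))^2"
    using assms by (subst variance_eq) auto
  with variance_positive show "(expectation (\<lambda>\<omega>. \<bar>f \<omega>\<bar>))^2 \<le> expectation (\<lambda>\<omega>. (f \<omega>)^2)"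
    by (metis diff_ge_0_iff_ge)
qed

lemma (in prob_space) expectation_square_sum_indep_le:
  fixes W :: "'i \<Rightarrow> 'a \<Rightarrow> real"
  assumes "finite I" "indep_vars (\<lambda>_. borel) W I"
    and W_measurable: "\<And>i. i \<in> I \<Longrightarrow> W i \<in> borel_measurable M"
    and W_bounded: "\<And>i. i \<in> I \<Longrightarrow> AE \<omega> in M. \<bar>W i \<omega>\<bar> \<le> c"
    and W_centered: "\<And>i. i \<in> I \<Longrightarrow> expectation (W i) = 0"
  shows "expectation (\<lambda>\<omega>. (\<Sum>i\<in>I. W i \<omega>)^2) \<le> real (card I) * c^2"
proof -
  have integrable_W: "integrable M (W i)" if "i \<in> I" for i
    using W_bounded[OF that] W_measurable[OF that] by (intro integrable_const_bound) auto
  have integrable_prod: "integrable M (\<lambda>\<omega>. W i \<omega> * W k \<omega>)" if "i \<in> I" "k \<in> I" for i k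
    using that by (intro integrable_mult_AE_bounded[where c = c] W_measurable W_bounded)
  have cross: "expectation (\<lambda>\<omega>. W i \<omega> * W k \<omega>) = 0" if "i \<in> I" "k \<in> I" "i \<noteq> k" for i k
  proof -
    have "indep_vars (\<lambda>_. borel) W {i, k}"
      using indep_vars_subset[OF assms(2)] that by auto
    then have "expectation (\<lambda>\<omega>. \<Prod>j\<in>{i, k}. W j \<omega>) = (\<Prod>j\<in>{i, k}. expectation (W j))"
      using that integrable_W by (intro indep_vars_lebesgue_integral) auto
    then show ?thesis using that W_centered by simp
  qed
  have diagonal: "expectation (\<lambda>\<omega>. W i \<omega> * W i \<omega>) \<le> c^2" if "i \<in> I" for i
  proof -
    have "\<bar>t\<bar> \<le> c \<Longrightarrow> t * t \<le> c^2" for t :: real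
      by (metis abs_ge_zero power2_abs power2_eq_square power_mono)
    then have "expectation (\<lambda>\<omega>. W i \<omega> * W i \<omega>) \<le> expectation (\<lambda>\<omega>. c^2)"
      using W_bounded[OF that] integrable_prod[OF that that]
      by (intro integral_mono_AE) (auto elim!: eventually_mono)
    then show ?thesis by (simp add: prob_space)
  qed
  have "expectation (\<lambda>\<omega>. (\<Sum>i\<in>I. W i \<omega>)^2) = (\<Sum>i\<in>I. \<Sum>k\<in>I. expectation (\<lambda>\<omega>. W i \<omega> * W k \<omega>))"
    using integrable_prod by (simp add: power2_eq_square sum_product Bochner_Integration.integral_sum)
  also have "\<dots> = (\<Sum>i\<in>I. expectation (\<lambda>\<omega>. W i \<omega> * W i \<omega>))"
    using assms(1) cross by (intro sum.cong refl) (auto simp: sum.remove intro!: sum.neutral)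
  also have "\<dots> \<le> real (card I) * c^2"
    using diagonal sum_bounded_above[of I "\<lambda>i. expectation (\<lambda>\<omega>. W i \<omega> * W i \<omega>)"] by auto
  finally show ?thesis .
qed

lemma (in prob_space) expectation_abs_sum_indep_le:
  fixes W :: "'i \<Rightarrow> 'a \<Rightarrow> real"
  assumes "finite I" "indep_vars (\<lambda>_. borel) W I"
    and W_measurable: "\<And>i. i \<in> I \<Longrightarrow> W i \<in> borel_measurable M"
    and W_bounded: "\<And>i. i \<in> I \<Longrightarrow> AE \<omega> in M. \<bar>W i \<omega>\<bar> \<le> c"
    and W_centered: "\<And>i. i \<in> I \<Longrightarrow> expectation (W i) = 0"
  shows "expectation (\<lambda>\<omega>. \<bar>\<Sum>i\<in>I. W i \<omega>\<bar>) \<le> sqrt (real (card I)) * \<bar>c\<bar>"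
proof -
  have integrable_prod: "integrable M (\<lambda>\<omega>. W i \<omega> * W k \<omega>)" if "i \<in> I" "k \<in> I" for i k
    using that by (intro integrable_mult_AE_bounded[where c = c] W_measurable W_bounded)
  have "integrable M (\<lambda>\<omega>. \<Sum>i\<in>I. W i \<omega>)"
    using W_bounded W_measurable by (intro Bochner_Integration.integrable_sum integrable_const_bound) auto
  moreover have "integrable M (\<lambda>\<omega>. (\<Sum>i\<in>I. W i \<omega>)^2)"
    using integrable_prod by (simp add: power2_eq_square sum_product)
  ultimately have "expectation (\<lambda>\<omega>. \<bar>\<Sum>i\<in>I. W i \<omega>\<bar>) \<le> sqrt (expectation (\<lambda>\<omega>. (\<Sum>i\<in>I. W i \<omega>)^2))"
    by (rule expectation_abs_le_sqrt)
  also have "\<dots> \<le> sqrt (real (card I) * c^2)"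
    using expectation_square_sum_indep_le[OF assms] by simp
  also have "\<dots> = sqrt (real (card I)) * \<bar>c\<bar>"
    by (simp add: real_sqrt_mult)
  finally show ?thesis .
qed

section \<open>One grid versus the better of two\<close>

lemma (in prob_space) INF_expectation_min_pairs_le:
  fixes f :: "'b \<Rightarrow> 'a \<Rightarrow> real"
  assumes "G \<noteq> {}" "\<And>B \<omega>. B \<in> G \<Longrightarrow> 0 \<le> f B \<omega>"
  shows "(INF BB\<in>G \<times> G. expectation (\<lambda>\<omega>. min (f (fst BB) \<omega>) (f (snd BB) \<omega>)))
           \<le> (INF B\<in>G. expectation (f B))"
proof (rule cINF_greatest[OF assms(1)])
  fix B assume "B \<in> G"
  have "bdd_below ((\<lambda>BB. expectation (\<lambda>\<omega>. min (f (fst BB) \<omega>) (f (snd BB) \<omega>))) ` (G \<times> G))"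
    using assms(2) by (intro bdd_belowI[of _ 0]) (auto intro: integral_nonneg_AE)
  from cINF_lower[OF this, of "(B, B)"] \<open>B \<in> G\<close>
  show "(INF BB\<in>G \<times> G. expectation (\<lambda>\<omega>. min (f (fst BB) \<omega>) (f (snd BB) \<omega>)))
          \<le> expectation (f B)"
    by simp
qed

text \<open>The point is the pointwise bound
  \<open>min (f B\<^sub>1) (f B\<^sub>2) \<ge> min (c B\<^sub>1) (c B\<^sub>2) - \<bar>f B\<^sub>1 - c B\<^sub>1\<bar> - \<bar>f B\<^sub>2 - c B\<^sub>2\<bar>\<close>:
  nearly constant losses leave no room for gains from switching grids.\<close>
lemma (in prob_space) INF_expectation_le_min_pairs:
  fixes f :: "'b \<Rightarrow> 'a \<Rightarrow> real"
  assumes "G \<noteq> {}" "\<And>B \<omega>. B \<in> G \<Longrightarrow> 0 \<le> f B \<omega>" "\<And>B. B \<in> G \<Longrightarrow> integrable M (f B)"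
    and close: "\<And>B. B \<in> G \<Longrightarrow> expectation (\<lambda>\<omega>. \<bar>f B \<omega> - c B\<bar>) \<le> \<delta>"
  shows "(INF B\<in>G. expectation (f B))
           \<le> (INF BB\<in>G \<times> G. expectation (\<lambda>\<omega>. min (f (fst BB) \<omega>) (f (snd BB) \<omega>))) + 3 * \<delta>"
proof -
  have INF_le: "(INF B\<in>G. expectation (f B)) \<le> c B + \<delta>" if B: "B \<in> G" for B
  proof -
    have "bdd_below ((\<lambda>B. expectation (f B)) ` G)"
      using assms(2) by (intro bdd_belowI[of _ 0]) (auto intro: integral_nonneg_AE)
    then have "(INF B\<in>G. expectation (f B)) \<le> expectation (f B)"
      using B by (rule cINF_lower)
    also have "\<dots> - c B = expectation (\<lambda>\<omega>. f B \<omega> - c B)"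
      using assms(3)[OF B] by (simp add: prob_space)
    also have "\<dots> \<le> expectation (\<lambda>\<omega>. \<bar>f B \<omega> - c B\<bar>)"
      using assms(3)[OF B] by (intro integral_mono) auto
    finally show ?thesis using close[OF B] by linarith
  qed
  have "(INF B\<in>G. expectation (f B)) - 3 * \<delta> \<le> expectation (\<lambda>\<omega>. min (f B\<^sub>1 \<omega>) (f B\<^sub>2 \<omega>))"
    if B: "B\<^sub>1 \<in> G" "B\<^sub>2 \<in> G" for B\<^sub>1 B\<^sub>2
  proof -
    have "min (c B\<^sub>1) (c B\<^sub>2) - expectation (\<lambda>\<omega>. \<bar>f B\<^sub>1 \<omega> - c B\<^sub>1\<bar>) - expectation (\<lambda>\<omega>. \<bar>f B\<^sub>2 \<omega> - c B\<^sub>2\<bar>)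
          = expectation (\<lambda>\<omega>. min (c B\<^sub>1) (c B\<^sub>2) - \<bar>f B\<^sub>1 \<omega> - c B\<^sub>1\<bar> - \<bar>f B\<^sub>2 \<omega> - c B\<^sub>2\<bar>)"
      using assms(3)[OF B(1)] assms(3)[OF B(2)] by (simp add: prob_space)
    also have "\<dots> \<le> expectation (\<lambda>\<omega>. min (f B\<^sub>1 \<omega>) (f B\<^sub>2 \<omega>))"
      using assms(3)[OF B(1)] assms(3)[OF B(2)] by (intro integral_mono) auto
    finally show ?thesis
      using INF_le[OF B(1)] INF_le[OF B(2)] close[OF B(1)] close[OF B(2)] by linarith
  qed
  then have "(INF B\<in>G. expectation (f B)) - 3 * \<delta>
               \<le> (INF BB\<in>G \<times> G. expectation (\<lambda>\<omega>. min (f (fst BB) \<omega>) (f (snd BB) \<omega>)))"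
    using assms(1) by (intro cINF_greatest) auto
  then show ?thesis by linarith
qed

section \<open>Bounded i.i.d. samples\<close>

locale iid_bounded = prob_space M for M :: "'a measure" +
  fixes X :: "nat \<Rightarrow> 'a \<Rightarrow> real"
  assumes X_measurable: "\<And>i. i \<ge> 1 \<Longrightarrow> X i \<in> borel_measurable M"
    and X_indep: "indep_vars (\<lambda>_. borel) X {1..}"
    and X_distr: "\<And>i. i \<ge> 1 \<Longrightarrow> distr M borel (X i) = distr M borel (X 1)"
    and X_bounded: "\<exists>c. AE \<omega> in M. \<bar>X 1 \<omega>\<bar> \<le> c"
begin

abbreviation max_abs :: "nat \<Rightarrow> 'a \<Rightarrow> real" where
  "max_abs g \<omega> \<equiv> block_max g (\<lambda>i. X i \<omega>)"

abbreviation loss :: "(nat \<Rightarrow> real) \<Rightarrow> nat \<Rightarrow> 'a \<Rightarrow> real" where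
  "loss B g \<omega> \<equiv> block_loss B g (\<lambda>i. X i \<omega>)"

definition x_max :: real where
  "x_max = real_of_ereal (esssup M (\<lambda>\<omega>. ereal \<bar>X 1 \<omega>\<bar>))"

lemma esssup_abs_X_eq_x_max: "esssup M (\<lambda>\<omega>. ereal \<bar>X 1 \<omega>\<bar>) = ereal x_max"
proof -
  have measurable: "(\<lambda>\<omega>. ereal \<bar>X 1 \<omega>\<bar>) \<in> borel_measurable M"
    using X_measurable[of 1] by simp
  obtain c where "AE \<omega> in M. \<bar>X 1 \<omega>\<bar> \<le> c" using X_bounded by blast
  then have "esssup M (\<lambda>\<omega>. ereal \<bar>X 1 \<omega>\<bar>) \<le> ereal c"
    using measurable by (intro esssup_I) auto
  moreover have "esssup M (\<lambda>_. 0 :: ereal) \<le> esssup M (\<lambda>\<omega>. ereal \<bar>X 1 \<omega>\<bar>)"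
    by (intro esssup_mono) auto
  then have "0 \<le> esssup M (\<lambda>\<omega>. ereal \<bar>X 1 \<omega>\<bar>)"
    by (simp add: esssup_const emeasure_space_1)
  ultimately show ?thesis
    unfolding x_max_def by (cases "esssup M (\<lambda>\<omega>. ereal \<bar>X 1 \<omega>\<bar>)") simp_all
qed

lemma AE_abs_X1_le_x_max: "AE \<omega> in M. \<bar>X 1 \<omega>\<bar> \<le> x_max"
  using esssup_AE[of "\<lambda>\<omega>. ereal \<bar>X 1 \<omega>\<bar>" M] unfolding esssup_abs_X_eq_x_max by simp

lemma prob_abs_X1_le_less_1:
  assumes "e > 0"
  shows "prob {\<omega> \<in> space M. \<bar>X 1 \<omega>\<bar> \<le> x_max - e} < 1"
proof -
  have "(\<lambda>\<omega>. ereal \<bar>X 1 \<omega>\<bar>) \<in> borel_measurable M"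
    using X_measurable[of 1] by simp
  moreover have "ereal (x_max - e) < esssup M (\<lambda>\<omega>. ereal \<bar>X 1 \<omega>\<bar>)"
    unfolding esssup_abs_X_eq_x_max using assms by simp
  ultimately have "0 < emeasure M {\<omega> \<in> space M. ereal (x_max - e) < ereal \<bar>X 1 \<omega>\<bar>}"
    by (rule esssup_pos_measure)
  then have "0 < prob {\<omega> \<in> space M. x_max - e < \<bar>X 1 \<omega>\<bar>}"
    by (simp add: emeasure_eq_measure)
  moreover have "{\<omega> \<in> space M. x_max - e < \<bar>X 1 \<omega>\<bar>} \<in> events"
    using X_measurable[of 1] by measurable
  then have "prob {\<omega> \<in> space M. \<not> x_max - e < \<bar>X 1 \<omega>\<bar>}
               = 1 - prob {\<omega> \<in> space M. x_max - e < \<bar>X 1 \<omega>\<bar>}"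
    by (rule prob_neg)
  ultimately show ?thesis by (simp add: not_less)
qed

lemma prob_abs_X_le:
  assumes "i \<ge> 1"
  shows "prob {\<omega> \<in> space M. \<bar>X i \<omega>\<bar> \<le> t} = prob {\<omega> \<in> space M. \<bar>X 1 \<omega>\<bar> \<le> t}"
proof -
  have via_distr: "prob {\<omega> \<in> space M. \<bar>X k \<omega>\<bar> \<le> t} = measure (distr M borel (X k)) {x. \<bar>x\<bar> \<le> t}"
    if "k \<ge> 1" for k
    using measure_distr[OF X_measurable[OF that], of "{x. \<bar>x\<bar> \<le> t}"]
    by (simp add: vimage_def Int_def conj_commute)
  show ?thesis
    by (simp only: via_distr[OF assms] via_distr[OF order.refl] X_distr[OF assms])
qed

lemma AE_abs_X_le_x_max:
  assumes "i \<ge> 1"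
  shows "AE \<omega> in M. \<bar>X i \<omega>\<bar> \<le> x_max"
proof -
  have events: "{\<omega> \<in> space M. \<bar>X k \<omega>\<bar> \<le> x_max} \<in> events" if "k \<ge> 1" for k
    using X_measurable[OF that] by measurable
  have "prob {\<omega> \<in> space M. \<bar>X 1 \<omega>\<bar> \<le> x_max} = 1"
    using AE_abs_X1_le_x_max prob_Collect_eq_1[OF events, of 1] by simp
  then show ?thesis
    using prob_abs_X_le[OF assms] prob_Collect_eq_1[OF events, OF assms] by simp
qed

lemma integral_comp_X:
  fixes f :: "real \<Rightarrow> real"
  assumes "i \<ge> 1" "f \<in> borel_measurable borel"
  shows "(\<integral>\<omega>. f (X i \<omega>) \<partial>M) = (\<integral>\<omega>. f (X 1 \<omega>) \<partial>M)"
proof -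
  have "(\<integral>\<omega>. f (X i \<omega>) \<partial>M) = integral\<^sup>L (distr M borel (X i)) f"
    using X_measurable[OF assms(1)] assms(2) by (rule integral_distr[symmetric])
  also have "\<dots> = integral\<^sup>L (distr M borel (X 1)) f"
    by (simp only: X_distr[OF assms(1)])
  also have "\<dots> = (\<integral>\<omega>. f (X 1 \<omega>) \<partial>M)"
    using X_measurable[OF order.refl] assms(2) by (rule integral_distr)
  finally show ?thesis .
qed

lemma prob_all_abs_X_le:
  "prob {\<omega> \<in> space M. \<forall>i\<in>{1..g}. \<bar>X i \<omega>\<bar> \<le> t} = prob {\<omega> \<in> space M. \<bar>X 1 \<omega>\<bar> \<le> t} ^ g"
proof (cases "g = 0")
  case True
  then show ?thesis by (simp add: prob_space)
next
  case False
  have "prob (\<Inter>i\<in>{1..g}. X i -` {x. \<bar>x\<bar> \<le> t} \<inter> space M)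
          = (\<Prod>i\<in>{1..g}. prob (X i -` {x. \<bar>x\<bar> \<le> t} \<inter> space M))"
    using False by (intro indep_varsD[OF X_indep]) auto
  also have "\<dots> = (\<Prod>i\<in>{1..g}. prob {\<omega> \<in> space M. \<bar>X 1 \<omega>\<bar> \<le> t})"
  proof (intro prod.cong refl)
    fix i assume "i \<in> {1..g}"
    then have "prob {\<omega> \<in> space M. \<bar>X i \<omega>\<bar> \<le> t} = prob {\<omega> \<in> space M. \<bar>X 1 \<omega>\<bar> \<le> t}"
      by (intro prob_abs_X_le) simp
    then show "prob (X i -` {x. \<bar>x\<bar> \<le> t} \<inter> space M) = prob {\<omega> \<in> space M. \<bar>X 1 \<omega>\<bar> \<le> t}"
      by (simp add: vimage_def Int_def conj_commute)
  qed
  also have "(\<Inter>i\<in>{1..g}. X i -` {x. \<bar>x\<bar> \<le> t} \<inter> space M)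
               = {\<omega> \<in> space M. \<forall>i\<in>{1..g}. \<bar>X i \<omega>\<bar> \<le> t}"
    using False by auto
  finally show ?thesis by simp
qed

lemma borel_measurable_max_abs: "(\<lambda>\<omega>. max_abs g \<omega>) \<in> borel_measurable M"
  unfolding block_max_def using X_measurable by (intro borel_measurable_Max) auto

lemma borel_measurable_loss: "(\<lambda>\<omega>. loss B g \<omega>) \<in> borel_measurable M"
  unfolding block_loss_eq using X_measurable borel_measurable_max_abs
  by (intro borel_measurable_divide borel_measurable_sum borel_measurable_scaled_grid_error) auto

lemma AE_all_abs_X_le_x_max: "AE \<omega> in M. \<forall>i\<in>{1..g}. \<bar>X i \<omega>\<bar> \<le> x_max"
  using AE_abs_X_le_x_max by (intro AE_finite_allI) auto

lemma AE_max_abs_le_x_max: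
  assumes "g \<ge> 1"
  shows "AE \<omega> in M. 0 \<le> max_abs g \<omega> \<and> max_abs g \<omega> \<le> x_max"
  using AE_all_abs_X_le_x_max[of g]
  by eventually_elim (auto intro: block_max_nonneg[OF assms] block_max_le[OF assms])

lemma integrable_max_abs: "g \<ge> 1 \<Longrightarrow> integrable M (\<lambda>\<omega>. max_abs g \<omega>)"
  by (intro integrable_const_bound[where B = x_max, OF _ borel_measurable_max_abs]
      eventually_mono[OF AE_max_abs_le_x_max]) auto

lemma integrable_loss:
  assumes "B \<in> grids"
  shows "integrable M (\<lambda>\<omega>. loss B g \<omega>)"
proof (rule integrable_const_bound[OF _ borel_measurable_loss])
  have bound: "loss B g \<omega> \<le> x_max^2" if "\<forall>i\<in>{1..g}. \<bar>X i \<omega>\<bar> \<le> x_max" for \<omega>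
  proof -
    have "scaled_grid_error B (max_abs g \<omega>) \<bar>X i \<omega>\<bar> \<le> x_max^2" if "i \<in> {1..g}" for i
    proof -
      have "scaled_grid_error B (max_abs g \<omega>) \<bar>X i \<omega>\<bar> \<le> \<bar>X i \<omega>\<bar>^2"
        by (rule scaled_grid_error_le_square[OF assms])
      also have "\<dots> \<le> x_max^2"
        using \<open>\<forall>i\<in>{1..g}. \<bar>X i \<omega>\<bar> \<le> x_max\<close> that by (intro power_mono) auto
      finally show ?thesis .
    qed
    then have "(\<Sum>i=1..g. scaled_grid_error B (max_abs g \<omega>) \<bar>X i \<omega>\<bar>) \<le> (\<Sum>i=1..g. x_max^2)"
      by (rule sum_mono)
    then show ?thesis by (simp add: block_loss_eq divide_le_eq mult.commute)
  qed
  show "AE \<omega> in M. norm (loss B g \<omega>) \<le> x_max^2"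
    using AE_all_abs_X_le_x_max[of g] by eventually_elim (simp add: bound block_loss_nonneg)
qed

lemma expectation_x_max_minus_max_abs_le:
  assumes "g \<ge> 1" "e > 0"
  shows "expectation (\<lambda>\<omega>. x_max - max_abs g \<omega>)
           \<le> e + x_max * prob {\<omega> \<in> space M. \<bar>X 1 \<omega>\<bar> \<le> x_max - e} ^ g"
proof -
  define S where "S = {\<omega> \<in> space M. \<forall>i\<in>{1..g}. \<bar>X i \<omega>\<bar> \<le> x_max - e}"
  have S: "S \<in> events"
    unfolding S_def using X_measurable by (intro sets.sets_Collect_finite_All) auto
  have "AE \<omega> in M. x_max - max_abs g \<omega> \<le> e + x_max * indicator S \<omega>"
    using AE_all_abs_X_le_x_max[of g] AE_space
  proof eventually_elim
    case (elim \<omega>)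
    show ?case
    proof (cases "\<omega> \<in> S")
      case True
      then show ?thesis using assms block_max_nonneg[OF assms(1), of "\<lambda>i. X i \<omega>"] by simp
    next
      case False
      then obtain i where "i \<in> {1..g}" "x_max - e < \<bar>X i \<omega>\<bar>"
        using elim unfolding S_def by auto
      then have "x_max - e < max_abs g \<omega>"
        using block_max_ge_abs[of i g "\<lambda>i. X i \<omega>"] by linarith
      then show ?thesis using False by simp
    qed
  qed
  then have "expectation (\<lambda>\<omega>. x_max - max_abs g \<omega>) \<le> expectation (\<lambda>\<omega>. e + x_max * indicator S \<omega>)"
    using S integrable_max_abs[OF assms(1)] by (intro integral_mono_AE) (auto simp: emeasure_eq_measure)
  also have "\<dots> = e + x_max * prob S"
    using S by (simp add: prob_space emeasure_eq_measure)
  also have "prob S = prob {\<omega> \<in> space M. \<bar>X 1 \<omega>\<bar> \<le> x_max - e} ^ g"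
    unfolding S_def by (rule prob_all_abs_X_le)
  finally show ?thesis .
qed

lemma expectation_x_max_minus_max_abs_tendsto_0:
  "(\<lambda>g. expectation (\<lambda>\<omega>. x_max - max_abs g \<omega>)) \<longlonglongrightarrow> 0"
proof (rule tendstoI)
  fix r :: real assume "r > 0"
  define q where "q = prob {\<omega> \<in> space M. \<bar>X 1 \<omega>\<bar> \<le> x_max - r / 2}"
  have "q < 1" unfolding q_def using \<open>r > 0\<close> by (intro prob_abs_X1_le_less_1) simp
  then have "(\<lambda>g. x_max * q ^ g) \<longlonglongrightarrow> 0"
    unfolding q_def by (intro tendsto_mult_right_zero LIMSEQ_power_zero) simp
  then have "eventually (\<lambda>g. x_max * q ^ g < r / 2) sequentially"
    by (rule order_tendstoD(2)) (simp add: \<open>r > 0\<close>)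
  then show "eventually (\<lambda>g. dist (expectation (\<lambda>\<omega>. x_max - max_abs g \<omega>)) 0 < r) sequentially"
    using eventually_ge_at_top[of 1]
  proof eventually_elim
    case (elim g)
    have "0 \<le> expectation (\<lambda>\<omega>. x_max - max_abs g \<omega>)"
      using AE_max_abs_le_x_max[OF elim(2)] by (intro integral_nonneg_AE) (auto elim!: eventually_mono)
    moreover have "expectation (\<lambda>\<omega>. x_max - max_abs g \<omega>) \<le> r / 2 + x_max * q ^ g"
      unfolding q_def using elim(2) \<open>r > 0\<close> by (intro expectation_x_max_minus_max_abs_le) simp_all
    ultimately show ?case using elim(1) by simp
  qed
qed

definition mean_error :: "(nat \<Rightarrow> real) \<Rightarrow> real" where
  "mean_error B = expectation (\<lambda>\<omega>. scaled_grid_error B x_max \<bar>X 1 \<omega>\<bar>)"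

lemma AE_scaled_grid_error_bounds:
  assumes "B \<in> grids" "i \<ge> 1"
  shows "AE \<omega> in M. 0 \<le> scaled_grid_error B x_max \<bar>X i \<omega>\<bar> \<and> scaled_grid_error B x_max \<bar>X i \<omega>\<bar> \<le> x_max^2"
  using AE_abs_X_le_x_max[OF assms(2)]
proof eventually_elim
  case (elim \<omega>)
  then have "\<bar>X i \<omega>\<bar>^2 \<le> x_max^2" by (intro power_mono) auto
  then show ?case using scaled_grid_error_le_square[OF assms(1)] scaled_grid_error_nonneg
    by (meson order_trans)
qed

lemma integrable_scaled_grid_error_X:
  assumes "B \<in> grids" "i \<ge> 1"
  shows "integrable M (\<lambda>\<omega>. scaled_grid_error B x_max \<bar>X i \<omega>\<bar>)"
  using X_measurable[OF assms(2)]
  by (intro integrable_const_bound[where B = "x_max^2"] eventually_mono[OF AE_scaled_grid_error_bounds[OF assms]])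
     auto

lemma mean_error_bounds:
  assumes "B \<in> grids"
  shows "0 \<le> mean_error B" "mean_error B \<le> x_max^2"
  unfolding mean_error_def
  using AE_scaled_grid_error_bounds[OF assms, of 1] integrable_scaled_grid_error_X[OF assms, of 1]
  by (auto intro!: integral_nonneg_AE integral_le_const elim!: eventually_mono)

lemma expectation_abs_empirical_mean_error_le:
  assumes B: "B \<in> grids" and g: "g \<ge> 1"
  shows "expectation (\<lambda>\<omega>. \<bar>(\<Sum>i=1..g. scaled_grid_error B x_max \<bar>X i \<omega>\<bar>) / real g - mean_error B\<bar>)
           \<le> x_max^2 / sqrt (real g)"
proof -
  define f where "f x = scaled_grid_error B x_max \<bar>x\<bar> - mean_error B" for x
  have f_measurable: "f \<in> borel_measurable borel"
    unfolding f_def by measurable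
  have indep: "indep_vars (\<lambda>_. borel) (\<lambda>i \<omega>. f (X i \<omega>)) {1..g}"
    using f_measurable by (intro indep_vars_compose2[OF indep_vars_subset[OF X_indep]]) auto
  have bounded: "AE \<omega> in M. \<bar>f (X i \<omega>)\<bar> \<le> x_max^2" if "i \<in> {1..g}" for i
    using that mean_error_bounds[OF B]
    by (intro eventually_mono[OF AE_scaled_grid_error_bounds[OF B, of i]]) (auto simp: f_def)
  have centered: "expectation (\<lambda>\<omega>. f (X i \<omega>)) = 0" if "i \<in> {1..g}" for i
    using integral_comp_X[OF _ f_measurable, of i] integrable_scaled_grid_error_X[OF B, of 1] that
    by (simp add: f_def mean_error_def prob_space)
  have "(\<Sum>i=1..g. scaled_grid_error B x_max \<bar>X i \<omega>\<bar>) / real g - mean_error B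
          = (\<Sum>i=1..g. f (X i \<omega>)) / real g" for \<omega>
    using g by (simp add: f_def sum_subtractf field_simps)
  then have "expectation (\<lambda>\<omega>. \<bar>(\<Sum>i=1..g. scaled_grid_error B x_max \<bar>X i \<omega>\<bar>) / real g - mean_error B\<bar>)
               = expectation (\<lambda>\<omega>. \<bar>\<Sum>i=1..g. f (X i \<omega>)\<bar>) / real g"
    by simp
  also have "\<dots> \<le> sqrt (real g) * x_max^2 / real g"
    using expectation_abs_sum_indep_le[OF _ indep _ bounded centered] X_measurable f_measurable
    by (simp add: measurable_compose divide_right_mono)
  also have "\<dots> = x_max^2 / sqrt (real g)"
    by (subst (1) real_div_sqrt[of "real g", symmetric]) (use g in auto)
  finally show ?thesis .
qed

lemma expectation_abs_loss_deviation_le: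
  assumes B: "B \<in> grids" and g: "g \<ge> 1"
  shows "expectation (\<lambda>\<omega>. \<bar>loss B g \<omega> - mean_error B\<bar>)
           \<le> 2 * x_max * expectation (\<lambda>\<omega>. x_max - max_abs g \<omega>) + x_max^2 / sqrt (real g)"
proof -
  define empirical where "empirical \<omega> = (\<Sum>i=1..g. scaled_grid_error B x_max \<bar>X i \<omega>\<bar>) / real g" for \<omega>
  have "AE \<omega> in M. \<bar>loss B g \<omega> - mean_error B\<bar>
          \<le> 2 * x_max * (x_max - max_abs g \<omega>) + \<bar>empirical \<omega> - mean_error B\<bar>"
    using AE_all_abs_X_le_x_max[of g]
  proof eventually_elim
    case (elim \<omega>)
    then have "\<bar>loss B g \<omega> - empirical \<omega>\<bar> \<le> 2 * x_max * (x_max - max_abs g \<omega>)"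
      unfolding empirical_def by (intro block_loss_diff_le[OF B g]) auto
    then show ?case by linarith
  qed
  moreover have "integrable M empirical"
    unfolding empirical_def
    by (intro Bochner_Integration.integrable_divide Bochner_Integration.integrable_sum
        integrable_scaled_grid_error_X[OF B]) auto
  ultimately have "expectation (\<lambda>\<omega>. \<bar>loss B g \<omega> - mean_error B\<bar>)
      \<le> expectation (\<lambda>\<omega>. 2 * x_max * (x_max - max_abs g \<omega>) + \<bar>empirical \<omega> - mean_error B\<bar>)"
    using integrable_loss[OF B] integrable_max_abs[OF g] by (intro integral_mono_AE) auto
  also have "\<dots> = 2 * x_max * expectation (\<lambda>\<omega>. x_max - max_abs g \<omega>)
                    + expectation (\<lambda>\<omega>. \<bar>empirical \<omega> - mean_error B\<bar>)"
    using \<open>integrable M empirical\<close> integrable_max_abs[OF g] by (simp add: prob_space)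
  also have "\<dots> \<le> 2 * x_max * expectation (\<lambda>\<omega>. x_max - max_abs g \<omega>) + x_max^2 / sqrt (real g)"
    unfolding empirical_def using expectation_abs_empirical_mean_error_le[OF B g] by simp
  finally show ?thesis .
qed

definition deviation_bound :: "nat \<Rightarrow> real" where
  "deviation_bound g = 2 * x_max * expectation (\<lambda>\<omega>. x_max - max_abs g \<omega>) + x_max^2 / sqrt (real g)"

lemma deviation_bound_tendsto_0: "deviation_bound \<longlonglongrightarrow> 0"
proof -
  have "(\<lambda>g. x_max^2 / sqrt (real g)) \<longlonglongrightarrow> 0"
    by (intro tendsto_divide_0[OF tendsto_const] filterlim_at_top_imp_at_infinity
        filterlim_compose[OF sqrt_at_top filterlim_real_sequentially])
  with tendsto_mult_right_zero[OF expectation_x_max_minus_max_abs_tendsto_0]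
  show ?thesis
    unfolding deviation_bound_def[abs_def] by (rule tendsto_add_zero)
qed

lemma R_star_minus_R_PO2_bounds:
  assumes "g \<ge> 1"
  shows "0 \<le> R_star M X g - R_PO2 M X g" "R_star M X g - R_PO2 M X g \<le> 3 * deviation_bound g"
proof -
  have "(INF B\<in>grids. expectation (\<lambda>\<omega>. loss B g \<omega>))
          \<le> (INF BB\<in>grids \<times> grids. expectation (\<lambda>\<omega>. min (loss (fst BB) g \<omega>) (loss (snd BB) g \<omega>)))
            + 3 * deviation_bound g"
    unfolding deviation_bound_def
    by (rule INF_expectation_le_min_pairs[where f = "\<lambda>B \<omega>. loss B g \<omega>" and c = mean_error,
          OF grids_nonempty block_loss_nonneg integrable_loss expectation_abs_loss_deviation_le[OF _ assms]])
  moreover have "(INF BB\<in>grids \<times> grids. expectation (\<lambda>\<omega>. min (loss (fst BB) g \<omega>) (loss (snd BB) g \<omega>)))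
                   \<le> (INF B\<in>grids. expectation (\<lambda>\<omega>. loss B g \<omega>))"
    by (rule INF_expectation_min_pairs_le[where f = "\<lambda>B \<omega>. loss B g \<omega>", OF grids_nonempty block_loss_nonneg])
  ultimately show "0 \<le> R_star M X g - R_PO2 M X g" "R_star M X g - R_PO2 M X g \<le> 3 * deviation_bound g"
    unfolding R_star_def R_PO2_def by linarith+
qed

end

theorem theorem1:
  fixes M :: "'a measure" and X :: "nat \<Rightarrow> 'a \<Rightarrow> real"
  assumes "prob_space M"
    and "\<And>i. i \<ge> 1 \<Longrightarrow> X i \<in> borel_measurable M"
    and "prob_space.indep_vars M (\<lambda>_. borel) X {1..}"
    and "\<And>i. i \<ge> 1 \<Longrightarrow> distr M borel (X i) = distr M borel (X 1)"
    and "\<exists>c::real. AE \<omega> in M. \<bar>X 1 \<omega>\<bar> \<le> c"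
  shows "(\<lambda>g. R_star M X g - R_PO2 M X g) \<longlonglongrightarrow> 0"
proof -
  interpret iid_bounded M X
    using assms by (intro iid_bounded.intro iid_bounded_axioms.intro)
  have "eventually (\<lambda>g. 0 \<le> R_star M X g - R_PO2 M X g) sequentially"
    "eventually (\<lambda>g. R_star M X g - R_PO2 M X g \<le> 3 * deviation_bound g) sequentially"
    using R_star_minus_R_PO2_bounds by (auto intro: eventually_mono[OF eventually_ge_at_top[of 1]])
  moreover have "(\<lambda>g. 3 * deviation_bound g) \<longlonglongrightarrow> 0"
    by (rule tendsto_mult_right_zero[OF deviation_bound_tendsto_0])
  ultimately show ?thesis
    by (rule tendsto_sandwich[OF _ _ tendsto_const])
qed

end
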